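(* (i) The graph with a single vertex and no arcs is a $2$-gadget. (ii) The directed cycle on three vertices (vertices $1,2,3$, arcs $(1,2),(2,3),(3,1)$) is a $3$-gadget (with any of its vertices as distinguished vertex $1$). (iii) Let $D$ be the oriented graph on vertex set $\{0,1,2,3,4,5\}$ with the 15 arcs $(1,0),(0,2),(2,1),(4,5),(5,3),(3,4),(5,0),(3,1),(4,2),(0,3),(1,4),(2,5),(0,4),(1,5),(2,3)$. Then $D$ is a $4$-gadget when vertex $4$ is taken as the distinguished first vertex, i.e. there are a $D$-function $f$ over $[4]$ and a function $\phi:[4]^{5}\to[4]$ such that $D$ is not $4$-solvable and every $x\in[4]^6$ with $f_v(x)\ne x_v$ for all $v$ satisfies $x_4=\phi(x_0,x_1,x_2,x_3,x_5)$.
   Context: A directed graph $D=(V,E)$ has arcs $E \subseteq \{(u,v)\in V^2 : u \neq v\}$; it is an oriented graph if it never contains both $(u,v)$ and $(v,u)$. $N^-(v)=\{u:(u,v)\in E\}$. For $q\ge2$ let $[q]=\{0,\dots,q-1\}$. A $D$-function over $[q]$ is a map $f=(f_v)_{v\in V}:[q]^V\to[q]^V$ with each $f_v(x)$ depending only on $(x_u)_{u\in N^-(v)}$. $D$ is $q$-solvable if some $D$-function $f$ over $[q]$ has the property that for every $x\in[q]^V$ there is $v$ with $f_v(x)=x_v$. A $q$-gadget is an oriented graph $D$ with vertices labelled $1,\dots,n$ (vertex $1$ being distinguished) which is not $q$-solvable, but for which there exist a $D$-function $f$ over $[q]$ and a function $\phi:[q]^{n-1}\to[q]$ such that every $x\in[q]^n$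 with $f_v(x)\ne x_v$ for all $v$ satisfies $x_1=\phi(x_2,\dots,x_n)$. *)

theory Defs
  imports Main "HOL-Library.FuncSet"
begin

definition oriented_graph :: "'a set \<Rightarrow> ('a \<times> 'a) set \<Rightarrow> bool" where
  "oriented_graph V E \<longleftrightarrow> finite V \<and> E \<subseteq> V \<times> V \<and>
     (\<forall>u v. (u, v) \<in> E \<longrightarrow> u \<noteq> v \<and> (v, u) \<notin> E)"

definition in_nbrs :: "('a \<times> 'a) set \<Rightarrow> 'a \<Rightarrow> 'a set" where
  "in_nbrs E v = {u. (u, v) \<in> E}"

definition configs :: "'a set \<Rightarrow> nat \<Rightarrow> ('a \<Rightarrow> nat) set" where
  "configs V q = (V \<rightarrow>\<^sub>E {..<q})"

definition D_function :: "'a set \<Rightarrow> ('a \<times> 'a) set \<Rightarrow> nat \<Rightarrow> (('a \<Rightarrow> nat) \<Rightarrow> ('a \<Rightarrow> nat)) \<Rightarrow> bool" where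
  "D_function V E q f \<longleftrightarrow>
     (\<forall>x \<in> configs V q. f x \<in> configs V q) \<and>
     (\<forall>v \<in> V. \<forall>x \<in> configs V q. \<forall>y \<in> configs V q.
        (\<forall>u \<in> in_nbrs E v. x u = y u) \<longrightarrow> f x v = f y v)"

definition q_solvable :: "'a set \<Rightarrow> ('a \<times> 'a) set \<Rightarrow> nat \<Rightarrow> bool" where
  "q_solvable V E q \<longleftrightarrow>
     (\<exists>f. D_function V E q f \<and> (\<forall>x \<in> configs V q. \<exists>v \<in> V. f x v = x v))"

text \<open>q-gadget with distinguished vertex d (playing the role of vertex 1);
  phi is a function of the remaining coordinates, i.e. of x restricted to V - {d}.\<close>
definition q_gadget :: "'a set \<Rightarrow> ('a \<times> 'a) set \<Rightarrow> nat \<Rightarrow> 'a \<Rightarrow> bool" where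
  "q_gadget V E q d \<longleftrightarrow>
     oriented_graph V E \<and> d \<in> V \<and> \<not> q_solvable V E q \<and>
     (\<exists>f \<phi>. D_function V E q f \<and>
        (\<forall>y \<in> configs (V - {d}) q. \<phi> y < q) \<and>
        (\<forall>x \<in> configs V q. (\<forall>v \<in> V. f x v \<noteq> x v) \<longrightarrow>
             x d = \<phi> (restrict x (V - {d}))))"

end

theory Submission
  imports Defs
begin

text \<open>Call a configuration x fixed-point-free for f if f x v \<noteq> x v at every vertex v.

  For the isolated vertex and the directed triangle this is elementary: if every vertex of the
  triangle copies its predecessor, fixed-point-free configurations take three distinct values,
  so over [3] any two of them determine the third. In the six-vertex graph the vertices 0, 1, 2
  and 3, 4, 5 form two directed triangles; each vertex of the first has one more in-neighbour in
  the second, each vertex of the second two more in the first. Counting fibres, one first fixes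
  the values on the first triangle so that the guesses there are wrong for at least 2, 3 and 2
  of the four values of the relevant vertex of the second triangle; a list version of the
  triangle argument then completes a fixed-point-free configuration. The D-function exhibiting
  the gadget property is given by explicit tables and checked exhaustively.\<close>

lemma sum_card_fibres_le:
  assumes "finite A" "finite U"
  shows "(\<Sum>u\<in>U. card {t\<in>A. h t = u}) \<le> card A"
proof -
  have "(\<Sum>u\<in>U. card {t\<in>A. h t = u}) = card (\<Union>u\<in>U. {t\<in>A. h t = u})"
    using assms by (intro card_UN_disjoint[symmetric]) auto
  also have "\<dots> \<le> card A"
    using assms(1) by (intro card_mono) auto
  finally show ?thesis .
qed

lemma ex_small_fibre:
  assumes "finite A" "finite U" "U \<noteq> {}"
  shows "\<exists>u\<in>U. card U * card {t\<in>A. h t = u} \<le> card A"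
proof (rule ccontr)
  assume "\<not> ?thesis"
  then have "(\<Sum>u\<in>U. card A) < (\<Sum>u\<in>U. card U * card {t\<in>A. h t = u})"
    using assms(2,3) by (intro sum_strict_mono) auto
  also have "\<dots> = card U * (\<Sum>u\<in>U. card {t\<in>A. h t = u})"
    by (simp add: sum_distrib_left)
  also have "\<dots> \<le> card U * card A"
    using sum_card_fibres_le[OF assms(1,2)] by simp
  finally show False
    by simp
qed

lemma card_fibre_compl:
  assumes "finite A"
  shows "card {t\<in>A. h t \<noteq> u} = card A - card {t\<in>A. h t = u}"
proof -
  have "{t\<in>A. h t \<noteq> u} = A - {t\<in>A. h t = u}"
    by auto
  then show ?thesis
    using assms by (simp add: card_Diff_subset)
qed

lemma card_ge_2_ex_neq:
  assumes "2 \<le> card A"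
  shows "\<exists>x\<in>A. x \<noteq> c"
proof (rule ccontr)
  assume "\<not> ?thesis"
  then have "card A \<le> card {c}"
    by (intro card_mono) auto
  with assms show False
    by simp
qed

lemma triangle_lists_escape:
  assumes X: "3 \<le> card X" and Y: "2 \<le> card Y" and Z: "2 \<le> card Z"
  shows "\<exists>x\<in>X. \<exists>y\<in>Y. \<exists>z\<in>Z. x \<noteq> g z \<and> y \<noteq> h x \<and> z \<noteq> k y"
proof -
  have "finite X" "finite Y" "Y \<noteq> {}"
    using X Y by (auto intro: card_ge_0_finite)
  then obtain y where y: "y \<in> Y" and few: "card Y * card {t\<in>X. h t = y} \<le> card X"
    using ex_small_fibre[of X Y h] by blast
  have "2 * card {t\<in>X. h t = y} \<le> card X"
    using few Y by (meson le_trans mult_le_mono1)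
  then have "2 \<le> card {t\<in>X. h t \<noteq> y}"
    using card_fibre_compl[OF \<open>finite X\<close>, of h y] X by simp
  moreover obtain z where z: "z \<in> Z" "z \<noteq> k y"
    using card_ge_2_ex_neq[OF Z] by blast
  ultimately obtain x where "x \<in> X" "y \<noteq> h x" "x \<noteq> g z"
    using card_ge_2_ex_neq[of "{t\<in>X. h t \<noteq> y}" "g z"] by auto
  with y z show ?thesis
    by blast
qed

lemma ex_values_with_large_miss_sets:
  fixes g0 g1 g2 :: "nat \<Rightarrow> nat \<Rightarrow> nat"
  shows "\<exists>a0<4. \<exists>a1<4. \<exists>a2<4.
    2 \<le> card {t. t < 4 \<and> g0 a1 t \<noteq> a0} \<and>
    3 \<le> card {t. t < 4 \<and> g1 a2 t \<noteq> a1} \<and>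
    2 \<le> card {t. t < 4 \<and> g2 a0 t \<noteq> a2}"
proof -
  have small_fibre: "\<exists>u\<in>U. card U * card {t. t < 4 \<and> h t = u} \<le> 4"
    if "finite U" "U \<noteq> {}" for U and h :: "nat \<Rightarrow> nat"
    using ex_small_fibre[OF _ that, of "{..<4}" h] by simp
  have miss: "card {t. t < 4 \<and> h t \<noteq> u} = 4 - card {t. t < 4 \<and> h t = u}"
    for h :: "nat \<Rightarrow> nat" and u
    using card_fibre_compl[of "{..<4::nat}" h u] by simp
  define heavy where "heavy c a \<longleftrightarrow> 3 \<le> card {t. t < 4 \<and> g0 c t = a}" for c a
  have heavy_unique: "a = a'" if "heavy c a" "heavy c a'" for c a a'
  proof (rule ccontr)
    assume "a \<noteq> a'"
    then have "card {t. t < 4 \<and> g0 c t = a} + card {t. t < 4 \<and> g0 c t = a'} \<le> 4"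
      using sum_card_fibres_le[of "{..<4::nat}" "{a, a'}" "g0 c"] by simp
    with that show False
      by (simp add: heavy_def)
  qed
  define major where "major c = (THE a. heavy c a)" for c
  have major: "major c = a" if "heavy c a" for c a
    unfolding major_def using that heavy_unique by blast
  txt \<open>Choosing a0 heavy for at most one c leaves three candidates for a1 with g0 a1 missing
    a0 at least twice; one of them also has a small fibre of g1 a2.\<close>
  obtain a0 where a0: "a0 < 4" and "card {c. c < 4 \<and> major c = a0} \<le> 1"
    using small_fibre[of "{..<4}" major] by (force simp: lessThan_empty_iff)
  define H where "H = {c. c < 4 \<and> heavy c a0}"
  have "H \<subseteq> {c. c < 4 \<and> major c = a0}"
    unfolding H_def using major by blast
  then have "card H \<le> 1"
    using card_mono[of "{c. c < 4 \<and> major c = a0}" H] \<open>card _ \<le> 1\<close> by simp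
  then have "3 \<le> card ({..<4} - H)"
    using diff_card_le_card_Diff[of H "{..<4::nat}"] by (simp add: H_def)
  obtain a2 where a2: "a2 < 4" and "card {t. t < 4 \<and> g2 a0 t = a2} \<le> 1"
    using small_fibre[of "{..<4}" "g2 a0"] by (force simp: lessThan_empty_iff)
  obtain a1 where a1: "a1 \<in> {..<4} - H"
    and "card ({..<4} - H) * card {t. t < 4 \<and> g1 a2 t = a1} \<le> 4"
    using small_fibre[of "{..<4} - H" "g1 a2"] \<open>3 \<le> card _\<close> by fastforce
  then have "3 * card {t. t < 4 \<and> g1 a2 t = a1} \<le> 4"
    using \<open>3 \<le> card _\<close> by (meson le_trans mult_le_mono1)
  then have "3 \<le> card {t. t < 4 \<and> g1 a2 t \<noteq> a1}"
    by (simp add: miss)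
  moreover have "2 \<le> card {t. t < 4 \<and> g0 a1 t \<noteq> a0}"
    using a1 by (auto simp: miss H_def heavy_def)
  moreover have "2 \<le> card {t. t < 4 \<and> g2 a0 t \<noteq> a2}"
    using \<open>card {t. t < 4 \<and> g2 a0 t = a2} \<le> 1\<close> by (simp add: miss)
  ultimately show ?thesis
    using a0 a1 a2 by blast
qed

text \<open>Here a_i and b_i are the values at the vertices i and i + 3 of the six-vertex graph below,
  and g_i, k_i give the guess at that vertex as a function of the values at its in-neighbours.\<close>

lemma six_vertex_escape:
  fixes g0 g1 g2 :: "nat \<Rightarrow> nat \<Rightarrow> nat" and k0 k1 k2 :: "nat \<Rightarrow> nat \<Rightarrow> nat \<Rightarrow> nat"
  shows "\<exists>a0<4. \<exists>a1<4. \<exists>a2<4. \<exists>b0<4. \<exists>b1<4. \<exists>b2<4.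
    a0 \<noteq> g0 a1 b2 \<and> a1 \<noteq> g1 a2 b0 \<and> a2 \<noteq> g2 a0 b1 \<and>
    b0 \<noteq> k0 b2 a0 a2 \<and> b1 \<noteq> k1 b0 a1 a0 \<and> b2 \<noteq> k2 b1 a2 a1"
proof -
  obtain a0 a1 a2 where a: "a0 < 4" "a1 < 4" "a2 < 4"
    and large: "2 \<le> card {t. t < 4 \<and> g0 a1 t \<noteq> a0}" "3 \<le> card {t. t < 4 \<and> g1 a2 t \<noteq> a1}"
      "2 \<le> card {t. t < 4 \<and> g2 a0 t \<noteq> a2}"
    using ex_values_with_large_miss_sets by blast
  obtain b0 b1 b2 where "b0 < 4" "b1 < 4" "b2 < 4"
    "a0 \<noteq> g0 a1 b2" "a1 \<noteq> g1 a2 b0" "a2 \<noteq> g2 a0 b1"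
    "b0 \<noteq> k0 b2 a0 a2" "b1 \<noteq> k1 b0 a1 a0" "b2 \<noteq> k2 b1 a2 a1"
    using triangle_lists_escape[OF large(2,3,1),
        of "\<lambda>b2. k0 b2 a0 a2" "\<lambda>b0. k1 b0 a1 a0" "\<lambda>b1. k2 b1 a2 a1"]
    by fastforce
  with a show ?thesis
    by blast
qed

lemma restrict_in_configs:
  assumes "\<And>v. v \<in> V \<Longrightarrow> g v < q"
  shows "restrict g V \<in> configs V q"
  using assms by (simp add: configs_def)

lemma configs_less:
  assumes "x \<in> configs V q" "v \<in> V"
  shows "x v < q"
  using assms by (auto simp: configs_def)

lemma D_function_cong:
  assumes "D_function V E q f" "v \<in> V" "x \<in> configs V q" "y \<in> configs V q"
    and "\<And>u. (u, v) \<in> E \<Longrightarrow> x u = y u"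
  shows "f x v = f y v"
  using assms unfolding D_function_def in_nbrs_def by blast

lemma q_gadget_if_determined:
  assumes "oriented_graph V E" "d \<in> V" "\<not> q_solvable V E q" "D_function V E q f"
    and determined: "\<And>x y. x \<in> configs V q \<Longrightarrow> y \<in> configs V q \<Longrightarrow>
      \<forall>v\<in>V. f x v \<noteq> x v \<Longrightarrow> \<forall>v\<in>V. f y v \<noteq> y v \<Longrightarrow> \<forall>v\<in>V - {d}. x v = y v \<Longrightarrow>
      x d = y d"
  shows "q_gadget V E q d"
proof -
  have "0 < q"
  proof (rule ccontr)
    assume "\<not> 0 < q"
    then have "configs V q = {}"
      using configs_less[of _ V q d] \<open>d \<in> V\<close> by auto
    then show False
      using assms(3,4) unfolding q_solvable_def by blast
  qed
  define fixpoint_free where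
    "fixpoint_free x \<longleftrightarrow> x \<in> configs V q \<and> (\<forall>v\<in>V. f x v \<noteq> x v)" for x
  define \<phi> where "\<phi> z = (if \<exists>x. fixpoint_free x \<and> restrict x (V - {d}) = z
    then (SOME x. fixpoint_free x \<and> restrict x (V - {d}) = z) d else 0)" for z
  have "\<phi> z < q" for z
  proof (cases "\<exists>x. fixpoint_free x \<and> restrict x (V - {d}) = z")
    case True
    define x where "x = (SOME x. fixpoint_free x \<and> restrict x (V - {d}) = z)"
    have "fixpoint_free x"
      unfolding x_def using True by (rule someI2_ex) simp
    then have "x d < q"
      using configs_less[of x V q d] \<open>d \<in> V\<close> unfolding fixpoint_free_def by blast
    moreover have "\<phi> z = x d"
      using True unfolding \<phi>_def x_def by (rule if_P)
    ultimately show ?thesis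
      by simp
  next
    case False
    then have "\<phi> z = 0"
      unfolding \<phi>_def by (rule if_not_P)
    with \<open>0 < q\<close> show ?thesis
      by simp
  qed
  moreover have "x d = \<phi> (restrict x (V - {d}))" if "fixpoint_free x" for x
  proof -
    define y where
      "y = (SOME y. fixpoint_free y \<and> restrict y (V - {d}) = restrict x (V - {d}))"
    have "fixpoint_free y \<and> restrict y (V - {d}) = restrict x (V - {d})"
      unfolding y_def by (rule someI[of _ x]) (simp add: that)
    then have "fixpoint_free y" and agree: "restrict y (V - {d}) = restrict x (V - {d})"
      by blast+
    have "\<forall>v\<in>V - {d}. y v = x v"
    proof
      fix v
      assume "v \<in> V - {d}"
      then show "y v = x v"
        using fun_cong[OF agree, of v] by simp
    qed
    with \<open>fixpoint_free y\<close> \<open>fixpoint_free x\<close> have "y d = x d"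
      unfolding fixpoint_free_def using determined[of y x] by blast
    moreover have "\<phi> (restrict x (V - {d})) = y d"
      unfolding \<phi>_def y_def using that by (intro if_P) blast
    ultimately show ?thesis
      by simp
  qed
  ultimately show ?thesis
    using assms(1-4) unfolding q_gadget_def fixpoint_free_def by blast
qed

lemma singleton_not_solvable:
  assumes "2 \<le> q"
  shows "\<not> q_solvable {v} {} q"
proof
  assume "q_solvable {v} {} q"
  then obtain f where f: "D_function {v} {} q f"
    and solves: "\<forall>x\<in>configs {v} q. \<exists>w\<in>{v}. f x w = x w"
    unfolding q_solvable_def by blast
  define c where "c = f (restrict (\<lambda>_. 0) {v}) v"
  define x where "x = restrict (\<lambda>_. if c = 0 then 1 else 0::nat) {v}"
  have x: "x \<in> configs {v} q"
    unfolding x_def using assms by (intro restrict_in_configs) auto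
  have "f x v = c"
    unfolding c_def using assms by (intro D_function_cong[OF f _ x] restrict_in_configs) auto
  moreover have "x v \<noteq> c"
    by (simp add: x_def)
  ultimately show False
    using solves x by auto
qed

lemma singleton_2_gadget: "q_gadget {v} {} 2 v"
proof (rule q_gadget_if_determined[where f = "\<lambda>x. restrict (\<lambda>_. 0) {v}"])
  show "oriented_graph {v} {}"
    by (simp add: oriented_graph_def)
  show "\<not> q_solvable {v} {} 2"
    by (rule singleton_not_solvable) simp
  show "D_function {v} {} 2 (\<lambda>x. restrict (\<lambda>_. 0) {v})"
    by (simp add: D_function_def restrict_in_configs)
  fix x y
  assume "x \<in> configs {v} 2" "y \<in> configs {v} 2"
    and "\<forall>w\<in>{v}. restrict (\<lambda>_. 0) {v} w \<noteq> x w" "\<forall>w\<in>{v}. restrict (\<lambda>_. 0) {v} w \<noteq> y w"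
  then show "x v = y v"
    using configs_less[of x "{v}" 2 v] configs_less[of y "{v}" 2 v] by auto
qed simp

lemma distinct_less_3_sum:
  fixes a b c :: nat
  assumes "a < 3" "b < 3" "c < 3" "a \<noteq> b" "b \<noteq> c" "a \<noteq> c"
  shows "a + b + c = 3"
  using assms by presburger

lemma triangle_not_solvable:
  assumes "3 \<le> q"
  shows "\<not> q_solvable {1::nat, 2, 3} {(1, 2), (2, 3), (3, 1)} q"
proof
  let ?V = "{1::nat, 2, 3}" and ?E = "{(1::nat, 2::nat), (2, 3), (3, 1)}"
  let ?cfg = "\<lambda>a b c. restrict ((\<lambda>_. 0)(1 := a, 2 := b, 3 := c)) ?V"
  assume "q_solvable ?V ?E q"
  then obtain f where f: "D_function ?V ?E q f"
    and solves: "\<forall>x\<in>configs ?V q. \<exists>v\<in>?V. f x v = x v"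
    unfolding q_solvable_def by blast
  have cfg: "?cfg a b c \<in> configs ?V q" if "a < q" "b < q" "c < q" for a b c
    using that by (intro restrict_in_configs) auto
  obtain a b c where abc: "a < q" "b < q" "c < q"
    "a \<noteq> f (?cfg 0 0 c) 1" "b \<noteq> f (?cfg a 0 0) 2" "c \<noteq> f (?cfg 0 b 0) 3"
    using triangle_lists_escape[of "{..<q}" "{..<q}" "{..<q}"
        "\<lambda>c. f (?cfg 0 0 c) 1" "\<lambda>a. f (?cfg a 0 0) 2" "\<lambda>b. f (?cfg 0 b 0) 3"] assms
    by auto
  have x: "?cfg a b c \<in> configs ?V q"
    using abc by (intro cfg)
  have "f (?cfg a b c) 1 = f (?cfg 0 0 c) 1" "f (?cfg a b c) 2 = f (?cfg a 0 0) 2"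
    "f (?cfg a b c) 3 = f (?cfg 0 b 0) 3"
    using abc assms by (intro D_function_cong[OF f _ x] cfg; force)+
  then show False
    using solves x abc by auto
qed

lemma triangle_3_gadget:
  assumes "d \<in> {1::nat, 2, 3}"
  shows "q_gadget {1, 2, 3} {(1, 2), (2, 3), (3, 1)} 3 d"
proof -
  let ?V = "{1::nat, 2, 3}" and ?E = "{(1::nat, 2::nat), (2, 3), (3, 1)}"
  let ?f = "\<lambda>x. restrict ((\<lambda>_. 0)(1 := x 3, 2 := x 1, 3 := x 2)) ?V"
  have "D_function ?V ?E 3 ?f"
    unfolding D_function_def
  proof (intro conjI ballI impI)
    fix x :: "nat \<Rightarrow> nat"
    assume "x \<in> configs ?V 3"
    then show "?f x \<in> configs ?V 3"
      by (intro restrict_in_configs) (auto intro: configs_less)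
  next
    fix v and x y :: "nat \<Rightarrow> nat"
    assume "v \<in> ?V" "\<forall>u\<in>in_nbrs ?E v. x u = y u"
    then show "?f x v = ?f y v"
      by (auto simp: in_nbrs_def)
  qed
  moreover have "x d = y d"
    if x: "x \<in> configs ?V 3" and y: "y \<in> configs ?V 3"
      and "\<forall>v\<in>?V. ?f x v \<noteq> x v" "\<forall>v\<in>?V. ?f y v \<noteq> y v" "\<forall>v\<in>?V - {d}. x v = y v"
    for x y
  proof -
    have "x 1 \<noteq> x 2" "x 2 \<noteq> x 3" "x 1 \<noteq> x 3" "y 1 \<noteq> y 2" "y 2 \<noteq> y 3" "y 1 \<noteq> y 3"
      using that(3,4) by auto
    then have "x 1 + x 2 + x 3 = 3" "y 1 + y 2 + y 3 = 3"
      using x y by (simp_all add: distinct_less_3_sum configs_less)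
    then show ?thesis
      using that(5) assms by auto
  qed
  moreover have "\<not> q_solvable ?V ?E 3"
    by (rule triangle_not_solvable) simp
  moreover have "oriented_graph ?V ?E"
    by (auto simp: oriented_graph_def)
  ultimately show ?thesis
    using assms by (intro q_gadget_if_determined[where f = ?f]) auto
qed

abbreviation six_vertex_arcs :: "(nat \<times> nat) set" where
  "six_vertex_arcs \<equiv> {(1,0),(0,2),(2,1),(4,5),(5,3),(3,4),(5,0),(3,1),(4,2),(0,3),(1,4),(2,5),
    (0,4),(1,5),(2,3)}"

lemma six_vertices: "{0..5::nat} = {0, 1, 2, 3, 4, 5}"
  by auto

lemma six_vertex_not_solvable: "\<not> q_solvable {0..5} six_vertex_arcs 4"
proof
  let ?cfg = "\<lambda>xs. restrict (nth xs) {0..5::nat}"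
  assume "q_solvable {0..5} six_vertex_arcs 4"
  then obtain f where f: "D_function {0..5} six_vertex_arcs 4 f"
    and solves: "\<forall>x\<in>configs {0..5} 4. \<exists>v\<in>{0..5}. f x v = x v"
    unfolding q_solvable_def by blast
  have cfg: "?cfg xs \<in> configs {0..5} 4" if "\<forall>v\<in>set xs. v < 4" "length xs = 6" for xs
    using that by (intro restrict_in_configs) auto
  obtain a0 a1 a2 b0 b1 b2 where ab: "a0 < 4" "a1 < 4" "a2 < 4" "b0 < 4" "b1 < 4" "b2 < 4"
    "a0 \<noteq> f (?cfg [0, a1, 0, 0, 0, b2]) 0" "a1 \<noteq> f (?cfg [0, 0, a2, b0, 0, 0]) 1"
    "a2 \<noteq> f (?cfg [a0, 0, 0, 0, b1, 0]) 2" "b0 \<noteq> f (?cfg [a0, 0, a2, 0, 0, b2]) 3"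
    "b1 \<noteq> f (?cfg [a0, a1, 0, b0, 0, 0]) 4" "b2 \<noteq> f (?cfg [0, a1, a2, 0, b1, 0]) 5"
    using six_vertex_escape[of "\<lambda>c t. f (?cfg [0, c, 0, 0, 0, t]) 0"
        "\<lambda>c t. f (?cfg [0, 0, c, t, 0, 0]) 1" "\<lambda>c t. f (?cfg [c, 0, 0, 0, t, 0]) 2"
        "\<lambda>s u w. f (?cfg [u, 0, w, 0, 0, s]) 3" "\<lambda>s u w. f (?cfg [w, u, 0, s, 0, 0]) 4"
        "\<lambda>s u w. f (?cfg [0, w, u, 0, s, 0]) 5"]
    by blast
  define x where "x = ?cfg [a0, a1, a2, b0, b1, b2]"
  have x: "x \<in> configs {0..5} 4"
    unfolding x_def using ab by (intro cfg) auto
  have "f x 0 = f (?cfg [0, a1, 0, 0, 0, b2]) 0" "f x 1 = f (?cfg [0, 0, a2, b0, 0, 0]) 1"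
    "f x 2 = f (?cfg [a0, 0, 0, 0, b1, 0]) 2" "f x 3 = f (?cfg [a0, 0, a2, 0, 0, b2]) 3"
    "f x 4 = f (?cfg [a0, a1, 0, b0, 0, 0]) 4" "f x 5 = f (?cfg [0, a1, a2, 0, b1, 0]) 5"
    using ab by (intro D_function_cong[OF f _ x] cfg; force simp: x_def)+
  then have "\<forall>v\<in>{0..5}. f x v \<noteq> x v"
    using ab unfolding six_vertices by (auto simp: x_def)
  then show False
    using solves x by blast
qed

definition guess_table0 :: "nat list list" where
  "guess_table0 = [[2,3,1,0],[1,2,0,3],[0,1,3,2],[3,0,2,1]]"

definition guess_table1 :: "nat list list" where
  "guess_table1 = [[2,0,3,1],[3,1,0,2],[1,3,2,0],[0,2,1,3]]"

definition guess_table2 :: "nat list list" where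
  "guess_table2 = [[3,2,1,0],[2,0,3,1],[0,1,2,3],[1,3,0,2]]"

definition guess_table3 :: "nat list list list" where
  "guess_table3 =
    [[[0,3,2,1],[3,1,0,2],[1,2,3,0],[2,0,1,3]], [[2,0,1,3],[0,3,2,1],[3,1,0,2],[1,2,3,0]],
     [[3,1,0,2],[1,2,3,0],[2,0,1,3],[0,3,2,1]], [[1,2,3,0],[2,0,1,3],[0,3,2,1],[3,1,0,2]]]"

definition guess_table4 :: "nat list list list" where
  "guess_table4 =
    [[[0,2,3,1],[1,0,2,3],[3,1,0,2],[2,3,1,0]], [[3,1,0,2],[2,3,1,0],[0,2,3,1],[1,0,2,3]],
     [[2,3,1,0],[0,2,3,1],[1,0,2,3],[3,1,0,2]], [[1,0,2,3],[3,1,0,2],[2,3,1,0],[0,2,3,1]]]"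

definition guess_table5 :: "nat list list list" where
  "guess_table5 =
    [[[0,1,3,2],[1,3,2,0],[2,0,1,3],[3,2,0,1]], [[2,0,1,3],[0,1,3,2],[3,2,0,1],[1,3,2,0]],
     [[1,3,2,0],[3,2,0,1],[0,1,3,2],[2,0,1,3]], [[3,2,0,1],[2,0,1,3],[1,3,2,0],[0,1,3,2]]]"

definition six_vertex_guess :: "(nat \<Rightarrow> nat) \<Rightarrow> nat \<Rightarrow> nat" where
  "six_vertex_guess x = restrict (nth
    [guess_table0 ! x 1 ! x 5, guess_table1 ! x 2 ! x 3, guess_table2 ! x 0 ! x 4,
     guess_table3 ! x 5 ! x 0 ! x 2, guess_table4 ! x 3 ! x 1 ! x 0, guess_table5 ! x 4 ! x 2 ! x 1])
    {0..5}"

definition six_vertex_fixpoint_free :: "nat \<Rightarrow> nat \<Rightarrow> nat \<Rightarrow> nat \<Rightarrow> nat \<Rightarrow> nat \<Rightarrow> bool" where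
  "six_vertex_fixpoint_free x0 x1 x2 x3 x4 x5 \<longleftrightarrow>
    guess_table0 ! x1 ! x5 \<noteq> x0 \<and> guess_table1 ! x2 ! x3 \<noteq> x1 \<and> guess_table2 ! x0 ! x4 \<noteq> x2 \<and>
    guess_table3 ! x5 ! x0 ! x2 \<noteq> x3 \<and> guess_table4 ! x3 ! x1 ! x0 \<noteq> x4 \<and>
    guess_table5 ! x4 ! x2 ! x1 \<noteq> x5"

text \<open>Exhaustive checks below are evaluated by code_simp; bounded quantifiers in list form are
  much faster to evaluate than the form \<forall>x<n.\<close>

lemma all_less_iff_list_all_upt: "(\<forall>x<n. P x) \<longleftrightarrow> list_all P [0..<n]"
  by (auto simp: list_all_iff)

lemma guess_tables_less:
  fixes a b c :: nat
  assumes "a < 4" "b < 4" "c < 4"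
  shows "guess_table0 ! a ! b < 4" "guess_table1 ! a ! b < 4" "guess_table2 ! a ! b < 4"
    "guess_table3 ! a ! b ! c < 4" "guess_table4 ! a ! b ! c < 4" "guess_table5 ! a ! b ! c < 4"
proof -
  have "\<forall>a<4. \<forall>b<4. \<forall>c<4. guess_table0 ! a ! b < 4 \<and> guess_table1 ! a ! b < 4 \<and>
    guess_table2 ! a ! b < 4 \<and> guess_table3 ! a ! b ! c < 4 \<and> guess_table4 ! a ! b ! c < 4 \<and>
    guess_table5 ! a ! b ! c < 4"
    unfolding all_less_iff_list_all_upt by code_simp
  from this[rule_format, OF assms]
  show "guess_table0 ! a ! b < 4" "guess_table1 ! a ! b < 4" "guess_table2 ! a ! b < 4"
    "guess_table3 ! a ! b ! c < 4" "guess_table4 ! a ! b ! c < 4" "guess_table5 ! a ! b ! c < 4"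
    by simp_all
qed

lemma six_vertex_fixpoint_free_unique:
  assumes "x0 < 4" "x1 < 4" "x2 < 4" "x3 < 4" "x5 < 4" "c < 4" "c' < 4"
    and "six_vertex_fixpoint_free x0 x1 x2 x3 c x5" "six_vertex_fixpoint_free x0 x1 x2 x3 c' x5"
  shows "c = c'"
proof -
  have "\<forall>x0<4. \<forall>x1<4. \<forall>x2<4. \<forall>x3<4. \<forall>x5<4. \<forall>c<4. \<forall>c'<4.
    six_vertex_fixpoint_free x0 x1 x2 x3 c x5 \<longrightarrow> six_vertex_fixpoint_free x0 x1 x2 x3 c' x5 \<longrightarrow>
    c = c'"
    unfolding all_less_iff_list_all_upt by code_simp
  from this[rule_format, OF assms] show ?thesis .
qed

lemma six_vertex_fixpoint_free_iff:
  "(\<forall>v\<in>{0..5}. six_vertex_guess x v \<noteq> x v) \<longleftrightarrow>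
    six_vertex_fixpoint_free (x 0) (x 1) (x 2) (x 3) (x 4) (x 5)"
  unfolding six_vertices by (auto simp: six_vertex_guess_def six_vertex_fixpoint_free_def)

lemma six_vertex_guess_D_function: "D_function {0..5} six_vertex_arcs 4 six_vertex_guess"
  unfolding D_function_def
proof (intro conjI ballI impI)
  fix x :: "nat \<Rightarrow> nat"
  assume "x \<in> configs {0..5} 4"
  then have "x 0 < 4" "x 1 < 4" "x 2 < 4" "x 3 < 4" "x 4 < 4" "x 5 < 4"
    by (simp_all add: configs_less)
  then show "six_vertex_guess x \<in> configs {0..5} 4"
    unfolding six_vertex_guess_def
    by (intro restrict_in_configs) (auto simp: six_vertices guess_tables_less)
next
  fix v and x y :: "nat \<Rightarrow> nat"
  assume "v \<in> {0..5}" and "\<forall>u\<in>in_nbrs six_vertex_arcs v. x u = y u"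
  then have agree: "x u = y u" if "(u, v) \<in> six_vertex_arcs" for u
    using that unfolding in_nbrs_def by blast
  from \<open>v \<in> {0..5}\<close> consider "v = 0" | "v = 1" | "v = 2" | "v = 3" | "v = 4" | "v = 5"
    unfolding six_vertices by blast
  then show "six_vertex_guess x v = six_vertex_guess y v"
    by cases (simp_all add: six_vertex_guess_def agree)
qed

lemma six_vertex_4_gadget: "q_gadget {0..5} six_vertex_arcs 4 4"
proof (rule q_gadget_if_determined[OF _ _ six_vertex_not_solvable six_vertex_guess_D_function])
  show "oriented_graph {0..5} six_vertex_arcs"
    by (auto simp: oriented_graph_def)
  fix x y
  assume x: "x \<in> configs {0..5} 4" and y: "y \<in> configs {0..5} 4"
    and fx: "\<forall>v\<in>{0..5}. six_vertex_guess x v \<noteq> x v"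
    and fy: "\<forall>v\<in>{0..5}. six_vertex_guess y v \<noteq> y v"
    and "\<forall>v\<in>{0..5} - {4}. x v = y v"
  then have "x 0 = y 0" "x 1 = y 1" "x 2 = y 2" "x 3 = y 3" "x 5 = y 5"
    by simp_all
  then have "six_vertex_fixpoint_free (x 0) (x 1) (x 2) (x 3) (x 4) (x 5)"
    "six_vertex_fixpoint_free (x 0) (x 1) (x 2) (x 3) (y 4) (x 5)"
    using fx fy by (simp_all add: six_vertex_fixpoint_free_iff)
  moreover have "x 0 < 4" "x 1 < 4" "x 2 < 4" "x 3 < 4" "x 4 < 4" "x 5 < 4" "y 4 < 4"
    using x y by (simp_all add: configs_less)
  ultimately show "x 4 = y 4"
    by (intro six_vertex_fixpoint_free_unique)
qed simp

theorem proposition9: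
  shows "q_gadget {1::nat} {} 2 1
    \<and> (\<forall>d \<in> {1::nat, 2, 3}. q_gadget {1, 2, 3} {(1, 2), (2, 3), (3, 1)} 3 d)
    \<and> q_gadget {0::nat..5}
           {(1,0),(0,2),(2,1),(4,5),(5,3),(3,4),(5,0),(3,1),(4,2),(0,3),(1,4),(2,5),(0,4),(1,5),(2,3)}
           4 4"
  by (intro conjI ballI singleton_2_gadget triangle_3_gadget six_vertex_4_gadget)

end
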